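(* Let $P$ be a finite poset and $q$ a positive integer such that every chain of $P$ has at most $q$ elements. Then $\Gamma(P,q)$ is the poset with elements $\{(p,k): p\in P,\ 1+\delta(p)\le k\le q-\nu(p)-1\}$ whose covering relations are $(p_1,k_1)\lessdot(p_2,k_2)$ if and only if either (1) $p_1=p_2$ and $k_1=k_2+1$, or (2) $p_1\lessdot p_2$ in $P$ and $k_1+1=k_2$.
   Context: For $p\in P$, $\delta(p)$ (resp. $\nu(p)$) is the number of elements less (resp. greater) than $p$ in a chain of maximum size containing $p$. $\Gamma(P,q)$ is defined as $\Gamma(P,R)$ for the restriction function $R(p)=\{k\in\mathbb{Z}:1+\delta(p)\le k\le q-\nu(p)\}$. For a restriction function $R$ (each $R(p)$ nonempty finite subset of $\mathbb{Z}$), let $R(p)^*=R(p)\setminus\{\max R(p)\}$, $R(p)_{>k}$ (resp. $R(p)_{<k}$) the smallest (resp. largest) element of $R(p)$ greater (resp. less) than $k$. $\Gamma(P,R)$ is the poset on $\{(p,k):p\in P,k\in R(p)^*\}$ whose order is the reflexive–transitive closure of the relation $(p_1,k_1)\lessdot(p_2,k_2)$ (its covering relations), holding iff either (i) $p_1=p_2$ and $R(p_1)_{>k_2}=k_1$; or (ii) $p_1\lessdot p_2$ in $P$, $k_1=R(p_1)_{<k_2}$, $k_1\ne\max R(p_1)$, and no $k\in R(p_2)$ with $k>k_2$ has $R(p_1)_{<k}=k_1$. *)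

theory Defs
  imports Main
begin

text \<open>A finite poset P is modelled as a finite carrier set P of a type with a
partial order (the order of P is the induced one).\<close>

definition pchain :: "'a::order set \<Rightarrow> 'a set \<Rightarrow> bool" where
  "pchain P C \<longleftrightarrow> C \<subseteq> P \<and> Complete_Partial_Order.chain (\<le>) C"

definition pcover :: "'a::order set \<Rightarrow> 'a \<Rightarrow> 'a \<Rightarrow> bool" where
  "pcover P x y \<longleftrightarrow> x \<in> P \<and> y \<in> P \<and> x < y \<and> \<not> (\<exists>z\<in>P. x < z \<and> z < y)"

definition maxchain_size :: "'a::order set \<Rightarrow> 'a \<Rightarrow> nat" where
  "maxchain_size P p = Max {card C | C. pchain P C \<and> p \<in> C}"

definition delta :: "'a::order set \<Rightarrow> 'a \<Rightarrow> nat" where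
  "delta P p = Max {card {c\<in>C. c < p} | C. pchain P C \<and> p \<in> C \<and> card C = maxchain_size P p}"

definition nu :: "'a::order set \<Rightarrow> 'a \<Rightarrow> nat" where
  "nu P p = Max {card {c\<in>C. p < c} | C. pchain P C \<and> p \<in> C \<and> card C = maxchain_size P p}"

definition is_succ_in :: "int set \<Rightarrow> int \<Rightarrow> int \<Rightarrow> bool" where
  "is_succ_in S k j \<longleftrightarrow> j \<in> S \<and> k < j \<and> (\<forall>i\<in>S. k < i \<longrightarrow> j \<le> i)"

definition is_pred_in :: "int set \<Rightarrow> int \<Rightarrow> int \<Rightarrow> bool" where
  "is_pred_in S k j \<longleftrightarrow> j \<in> S \<and> j < k \<and> (\<forall>i\<in>S. i < k \<longrightarrow> i \<le> j)"

definition Gamma_carrier :: "'a::order set \<Rightarrow> ('a \<Rightarrow> int set) \<Rightarrow> ('a \<times> int) set" where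
  "Gamma_carrier P R = {(p, k). p \<in> P \<and> k \<in> R p - {Max (R p)}}"

definition Gamma_gen :: "'a::order set \<Rightarrow> ('a \<Rightarrow> int set) \<Rightarrow> ('a \<times> int) rel" where
  "Gamma_gen P R = {((p1, k1), (p2, k2)).
     (p1, k1) \<in> Gamma_carrier P R \<and> (p2, k2) \<in> Gamma_carrier P R \<and>
     ((p1 = p2 \<and> is_succ_in (R p1) k2 k1) \<or>
      (pcover P p1 p2 \<and> is_pred_in (R p1) k2 k1 \<and> k1 \<noteq> Max (R p1) \<and>
       \<not> (\<exists>k\<in>R p2. k > k2 \<and> is_pred_in (R p1) k k1)))}"

definition Gamma_le :: "'a::order set \<Rightarrow> ('a \<Rightarrow> int set) \<Rightarrow> ('a \<times> int) rel" where
  "Gamma_le P R = (Gamma_gen P R)\<^sup>*"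

definition Gamma_cover :: "'a::order set \<Rightarrow> ('a \<Rightarrow> int set) \<Rightarrow> 'a \<times> int \<Rightarrow> 'a \<times> int \<Rightarrow> bool" where
  "Gamma_cover P R x y \<longleftrightarrow> x \<in> Gamma_carrier P R \<and> y \<in> Gamma_carrier P R \<and> x \<noteq> y \<and>
     (x, y) \<in> Gamma_le P R \<and>
     \<not> (\<exists>z\<in>Gamma_carrier P R. z \<noteq> x \<and> z \<noteq> y \<and> (x, z) \<in> Gamma_le P R \<and> (z, y) \<in> Gamma_le P R)"

text \<open>The restriction function for Gamma(P,q).\<close>
definition Rq :: "'a::order set \<Rightarrow> int \<Rightarrow> 'a \<Rightarrow> int set" where
  "Rq P q p = {k. 1 + int (delta P p) \<le> k \<and> k \<le> q - int (nu P p)}"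

end

theory Submission
  imports Defs
begin

text \<open>For an interval restriction function R(p) = [lo p, hi p] the next element of R(p) above k
is k + 1 and the previous one below k is k - 1, so the two generating clauses of \<Gamma>(P,R) reduce
to "same p, k drops by one" and "p goes up by a cover, k rises by one". Along any path in
\<Gamma>(P,R) the integer coordinate therefore decreases on vertical steps and increases by exactly one
on each cover step; since a cover of P cannot be reached through an intermediate element, no path
of length two or more joins the ends of a generating step, and the generating steps are exactly
the covers. For \<Gamma>(P,q) the sets R(p) are nonempty because splicing the part below p of a chain
realising \<delta>(p) with the part above p of a chain realising \<nu>(p) gives a chain with
\<delta>(p) + \<nu>(p) + 1 \<le> q elements.\<close>

lemma Max_atLeastAtMost_int: "(lo::int) \<le> hi \<Longrightarrow> Max {lo..hi} = hi"
  by (rule Max_eqI) auto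

lemma is_succ_in_atLeastAtMost:
  fixes lo hi k :: int
  assumes "lo \<le> k" and "k < hi"
  shows "is_succ_in {lo..hi} k j \<longleftrightarrow> j = k + 1"
proof
  assume succ: "is_succ_in {lo..hi} k j"
  then have "j \<le> k + 1" using assms unfolding is_succ_in_def by auto
  with succ show "j = k + 1" unfolding is_succ_in_def by auto
qed (use assms in \<open>auto simp: is_succ_in_def\<close>)

lemma is_pred_in_atLeastAtMost:
  fixes lo hi j :: int
  assumes "j < hi"
  shows "is_pred_in {lo..hi} k j \<longleftrightarrow> lo \<le> j \<and> k = j + 1"
proof
  assume pred: "is_pred_in {lo..hi} k j"
  then have "j + 1 \<in> {lo..hi}" using assms unfolding is_pred_in_def by auto
  then have "\<not> j + 1 < k" using pred unfolding is_pred_in_def by force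
  with pred show "lo \<le> j \<and> k = j + 1" unfolding is_pred_in_def by auto
qed (use assms in \<open>auto simp: is_pred_in_def\<close>)

locale interval_restriction =
  fixes P :: "'a::order set" and R :: "'a \<Rightarrow> int set" and lo hi :: "'a \<Rightarrow> int"
  assumes R_eq: "p \<in> P \<Longrightarrow> R p = {lo p..hi p}"
    and lo_le_hi: "p \<in> P \<Longrightarrow> lo p \<le> hi p"
begin

lemma Max_R: "p \<in> P \<Longrightarrow> Max (R p) = hi p"
  using Max_atLeastAtMost_int[OF lo_le_hi] R_eq by simp

lemma Gamma_carrier_eq: "Gamma_carrier P R = {(p, k). p \<in> P \<and> lo p \<le> k \<and> k \<le> hi p - 1}"
proof -
  have "k \<in> R p - {Max (R p)} \<longleftrightarrow> lo p \<le> k \<and> k \<le> hi p - 1" if "p \<in> P" for p k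
    unfolding Max_R[OF that] by (auto simp: R_eq[OF that])
  then show ?thesis unfolding Gamma_carrier_def by auto
qed

lemma Gamma_gen_iff:
  "((p1, k1), (p2, k2)) \<in> Gamma_gen P R \<longleftrightarrow>
     (p1, k1) \<in> Gamma_carrier P R \<and> (p2, k2) \<in> Gamma_carrier P R \<and>
     ((p1 = p2 \<and> k1 = k2 + 1) \<or> (pcover P p1 p2 \<and> k1 + 1 = k2))"
proof (cases "(p1, k1) \<in> Gamma_carrier P R \<and> (p2, k2) \<in> Gamma_carrier P R")
  case True
  then have "p1 \<in> P" "p2 \<in> P" "lo p1 \<le> k1" "k1 < hi p1" "lo p2 \<le> k2" "k2 < hi p2"
    by (auto simp: Gamma_carrier_eq)
  moreover from \<open>p1 \<in> P\<close> have "R p1 = {lo p1..hi p1}" "Max (R p1) = hi p1"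
    by (rule R_eq, rule Max_R)
  ultimately show ?thesis
    unfolding Gamma_gen_def
    by (auto simp: is_succ_in_atLeastAtMost is_pred_in_atLeastAtMost)
qed (auto simp: Gamma_gen_def)

lemma Gamma_gen_irrefl: "(x, x) \<notin> Gamma_gen P R"
  using Gamma_gen_iff[of "fst x" "snd x" "fst x" "snd x"] by (auto simp: pcover_def)

lemma Gamma_le_cases:
  assumes "((p1, k1), (p2, k2)) \<in> Gamma_le P R"
  shows "(p1 = p2 \<and> k2 \<le> k1) \<or> (p1 < p2 \<and> (pcover P p1 p2 \<longrightarrow> k2 \<le> k1 + 1))"
  using assms unfolding Gamma_le_def
proof (induction rule: rtrancl_induct2)
  case (step p k p' k')
  from step.hyps(2) consider "p = p'" "k = k' + 1" | "pcover P p p'" "k + 1 = k'"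
    by (auto simp: Gamma_gen_iff)
  then show ?case
  proof cases
    case 2
    then have "p < p'" "p \<in> P" by (auto simp: pcover_def)
    then have "p1 < p \<Longrightarrow> \<not> pcover P p1 p'" by (auto simp: pcover_def)
    with step.IH 2 \<open>p < p'\<close> show ?thesis by auto
  qed (use step.IH in auto)
qed simp

lemma Gamma_cover_iff_Gamma_gen:
  assumes x: "x \<in> Gamma_carrier P R" and y: "y \<in> Gamma_carrier P R"
  shows "Gamma_cover P R x y \<longleftrightarrow> (x, y) \<in> Gamma_gen P R"
proof
  assume cover: "Gamma_cover P R x y"
  then have "(x, y) \<in> (Gamma_gen P R)\<^sup>*" "x \<noteq> y"
    by (auto simp: Gamma_cover_def Gamma_le_def)
  then obtain z where xz: "(x, z) \<in> (Gamma_gen P R)\<^sup>*" and zy: "(z, y) \<in> Gamma_gen P R"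
    by (metis rtranclE)
  have "z \<in> Gamma_carrier P R"
    using zy Gamma_gen_iff[of "fst z" "snd z" "fst y" "snd y"] by auto
  moreover have "z \<noteq> y" using zy Gamma_gen_irrefl by metis
  ultimately have "z = x"
    using cover xz zy by (auto simp: Gamma_cover_def Gamma_le_def)
  with zy show "(x, y) \<in> Gamma_gen P R" by simp
next
  assume gen: "(x, y) \<in> Gamma_gen P R"
  obtain p1 k1 p2 k2 where xy: "x = (p1, k1)" "y = (p2, k2)" by fastforce
  have step: "(p1 = p2 \<and> k1 = k2 + 1) \<or> (pcover P p1 p2 \<and> k1 + 1 = k2)"
    using gen by (simp add: xy Gamma_gen_iff)
  have no_between: "z \<notin> Gamma_carrier P R"
    if "z \<noteq> x" "z \<noteq> y" "(x, z) \<in> Gamma_le P R" "(z, y) \<in> Gamma_le P R" for z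
  proof
    assume "z \<in> Gamma_carrier P R"
    then have "fst z \<in> P" by (auto simp: Gamma_carrier_eq)
    moreover obtain p k where "z = (p, k)" by fastforce
    ultimately show False
      using step that Gamma_le_cases[of p1 k1 p k] Gamma_le_cases[of p k p2 k2]
      by (auto simp: xy pcover_def)
  qed
  have "x \<noteq> y" using gen Gamma_gen_irrefl by metis
  with x y gen no_between show "Gamma_cover P R x y"
    by (auto simp: Gamma_cover_def Gamma_le_def)
qed

end

lemma Max_image_subsets_attained:
  assumes "finite P" and "\<And>C. Q C \<Longrightarrow> C \<subseteq> P" and "Q C0"
  shows "\<exists>C. Q C \<and> f C = Max {f C | C. Q C}"
proof -
  have "{C. Q C} \<subseteq> Pow P" using assms(2) by blast
  then have "finite (f ` {C. Q C})" using assms(1) by (meson finite_Pow_iff finite_imageI finite_subset)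
  moreover have "f ` {C. Q C} \<noteq> {}" using assms(3) by blast
  ultimately have "Max (f ` {C. Q C}) \<in> f ` {C. Q C}" by (rule Max_in)
  then show ?thesis by (auto simp: image_Collect)
qed

lemma maximum_chain_through:
  assumes "finite P" and "p \<in> P"
  shows "\<exists>C. pchain P C \<and> p \<in> C \<and> card C = maxchain_size P p"
proof -
  have "pchain P {p}" using assms(2) by (simp add: pchain_def chain_def)
  then show ?thesis
    using Max_image_subsets_attained[of P "\<lambda>C. pchain P C \<and> p \<in> C" "{p}" card] assms(1)
    by (auto simp: maxchain_size_def pchain_def)
qed

lemma Max_over_maximum_chains_attained:
  assumes "finite P" and "p \<in> P"
  shows "\<exists>C. pchain P C \<and>
    f C = Max {f C | C. pchain P C \<and> p \<in> C \<and> card C = maxchain_size P p}"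
proof -
  obtain C0 where "pchain P C0 \<and> p \<in> C0 \<and> card C0 = maxchain_size P p"
    using maximum_chain_through[OF assms] by blast
  from Max_image_subsets_attained[OF assms(1), where Q = "\<lambda>C. pchain P C \<and> p \<in> C \<and>
      card C = maxchain_size P p" and f = f, OF _ this] show ?thesis
    by (auto simp: pchain_def)
qed

lemma pchain_splice:
  assumes "pchain P C1" and "pchain P C2" and "p \<in> P"
  shows "pchain P ({c \<in> C1. c < p} \<union> {p} \<union> {c \<in> C2. p < c})"
proof -
  have "x \<le> y \<or> y \<le> x" if "x \<in> C1" "y \<in> C1" for x y
    using assms(1) that by (auto simp: pchain_def chain_def)
  moreover have "x \<le> y \<or> y \<le> x" if "x \<in> C2" "y \<in> C2" for x y
    using assms(2) that by (auto simp: pchain_def chain_def)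
  ultimately show ?thesis
    using assms by (auto simp: pchain_def chain_def intro: order.strict_implies_order less_trans)
qed

lemma chain_of_card_delta_nu:
  assumes "finite P" and "p \<in> P"
  shows "\<exists>C. pchain P C \<and> card C = delta P p + nu P p + 1"
proof -
  obtain C1 where C1: "pchain P C1" "card {c \<in> C1. c < p} = delta P p"
    using Max_over_maximum_chains_attained[OF assms, of "\<lambda>C. card {c \<in> C. c < p}"]
    unfolding delta_def by blast
  obtain C2 where C2: "pchain P C2" "card {c \<in> C2. p < c} = nu P p"
    using Max_over_maximum_chains_attained[OF assms, of "\<lambda>C. card {c \<in> C. p < c}"]
    unfolding nu_def by blast
  have "finite C1" "finite C2"
    using C1(1) C2(1) assms(1) by (auto simp: pchain_def intro: finite_subset)
  then have "card ({c \<in> C1. c < p} \<union> {p} \<union> {c \<in> C2. p < c}) = delta P p + nu P p + 1"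
    using C1(2) C2(2) by (subst card_Un_disjoint; auto)+
  with pchain_splice[OF C1(1) C2(1) assms(2)] show ?thesis by blast
qed

lemma delta_nu_bound:
  assumes "finite P" and "p \<in> P" and "\<forall>C. pchain P C \<longrightarrow> int (card C) \<le> q"
  shows "1 + int (delta P p) \<le> q - int (nu P p)"
  using chain_of_card_delta_nu[OF assms(1,2)] assms(3) by force

theorem corollary2p22:
  fixes P :: "'a::order set" and q :: int
  assumes "finite P" and "q > 0"
    and "\<forall>C. pchain P C \<longrightarrow> int (card C) \<le> q"
  shows "Gamma_carrier P (Rq P q) =
           {(p, k). p \<in> P \<and> 1 + int (delta P p) \<le> k \<and> k \<le> q - int (nu P p) - 1}
       \<and> (\<forall>x\<in>Gamma_carrier P (Rq P q). \<forall>y\<in>Gamma_carrier P (Rq P q).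
            Gamma_cover P (Rq P q) x y \<longleftrightarrow>
              ((fst x = fst y \<and> snd x = snd y + 1) \<or>
               (pcover P (fst x) (fst y) \<and> snd x + 1 = snd y)))"
proof -
  interpret interval_restriction P "Rq P q" "\<lambda>p. 1 + int (delta P p)" "\<lambda>p. q - int (nu P p)"
    by unfold_locales
      (auto simp: Rq_def atLeastAtMost_def intro: delta_nu_bound[OF assms(1) _ assms(3)])
  show ?thesis
    using Gamma_carrier_eq Gamma_cover_iff_Gamma_gen Gamma_gen_iff by auto
qed

end
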